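(* Let $\Omega\subset\mathbb{Z}_2^m\setminus\{\mathbf 0\}$ be nonempty with every tuple of odd Hamming weight, and let $\Omega'\subset\mathbb{Z}_2^n\setminus\{\mathbf 0\}$ be nonempty. Let $k=\min_{\beta\in\Omega}s(\beta)$ and $\Omega^*=\{\beta\in\Omega: s(\beta)=k\}$. If $\sum_{\beta\in\Omega^*}\beta\neq\mathbf 0$ in $\mathbb{Z}_2^m$ or $\sum_{\beta\in\Omega'}\beta\neq\mathbf 0$ in $\mathbb{Z}_2^n$, then the Cartesian product $\mathrm{NEPS}(P_3,\ldots,P_3;\Omega)\,\square\,\mathrm{NEPS}(P_2,\ldots,P_2;\Omega')$ exhibits pretty good state transfer between some pair of distinct vertices.
   Context: $P_m$ denotes the path on $m$ vertices. For graphs $G_1,\dots,G_n$ and $\Omega\subset\mathbb{Z}_2^n\setminus\{\mathbf 0\}$, $\mathrm{NEPS}(G_1,\dots,G_n;\Omega)$ is the graph on $V(G_1)\times\cdots\times V(G_n)$ in which $(x_1,\dots,x_n)$ and $(y_1,\dots,y_n)$ are adjacent iff there is $\beta\in\Omega$ with $x_i=y_i$ whenever $\beta_i=0$ and $x_i$ adjacent to $y_i$ in $G_i$ whenever $\beta_i=1$; its adjacency matrix is $\sum_{\beta\in\Omega}A_1^{\beta_1}\otimes\cdots\otimes A_n^{\beta_n}$. The Hamming weight $s(\beta)$ is the number of entries of $\beta$ equal to $1$. The Cartesian product $G\square G'$ has vertex set $V(G)\times V(G')$ with $(a,b)\sim(c,d)$ iff either $a\sim c$ and $b=d$, or $a=c$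 and $b\sim d$. The transition matrix of a graph with adjacency matrix $A$ is $H(t)=\exp(-itA)$; a graph has pretty good state transfer between vertices $x,y$ if for every $\epsilon>0$ there is $t\in\mathbb R$ with $\big||e_x^TH(t)e_y|-1\big|<\epsilon$. *)

theory Defs
  imports "HOL-Analysis.Analysis"
begin

definition path_adj :: "nat \<Rightarrow> nat \<Rightarrow> nat \<Rightarrow> bool" where
  "path_adj k i j \<longleftrightarrow> i < k \<and> j < k \<and> (i = j + 1 \<or> j = i + 1)"

text \<open>Elements of Z_2^m are boolean lists of length m.\<close>
definition hamming :: "bool list \<Rightarrow> nat" where
  "hamming \<beta> = length (filter id \<beta>)"

definition z2_sum :: "nat \<Rightarrow> bool list set \<Rightarrow> bool list" where
  "z2_sum m S = map (\<lambda>i. odd (card {\<beta>\<in>S. \<beta> ! i})) [0..<m]"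

definition z2_zero :: "nat \<Rightarrow> bool list" where
  "z2_zero m = replicate m False"

definition neps_verts :: "nat \<Rightarrow> nat \<Rightarrow> nat list set" where
  "neps_verts k m = {xs. length xs = m \<and> (\<forall>a\<in>set xs. a < k)}"

definition neps_adj :: "(nat \<Rightarrow> nat \<Rightarrow> bool) \<Rightarrow> bool list set \<Rightarrow> nat list \<Rightarrow> nat list \<Rightarrow> bool" where
  "neps_adj G \<Omega> x y \<longleftrightarrow> (\<exists>\<beta>\<in>\<Omega>. \<forall>i<length \<beta>.
      (\<not> \<beta> ! i \<longrightarrow> x ! i = y ! i) \<and> (\<beta> ! i \<longrightarrow> G (x ! i) (y ! i)))"

definition cart_adj :: "('a \<Rightarrow> 'a \<Rightarrow> bool) \<Rightarrow> ('b \<Rightarrow> 'b \<Rightarrow> bool) \<Rightarrow> 'a \<times> 'b \<Rightarrow> 'a \<times> 'b \<Rightarrow> bool" where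
  "cart_adj E E' u v \<longleftrightarrow> (E (fst u) (fst v) \<and> snd u = snd v) \<or> (fst u = fst v \<and> E' (snd u) (snd v))"

fun adj_pow :: "'a set \<Rightarrow> ('a \<Rightarrow> 'a \<Rightarrow> bool) \<Rightarrow> nat \<Rightarrow> 'a \<Rightarrow> 'a \<Rightarrow> real" where
  "adj_pow V E 0 x y = (if x = y then 1 else 0)"
| "adj_pow V E (Suc k) x y = (\<Sum>z\<in>V. (if E x z then 1 else 0) * adj_pow V E k z y)"

text \<open>Entry (x,y) of the transition matrix H(t) = exp(-itA), via the exponential series.\<close>
definition transition :: "'a set \<Rightarrow> ('a \<Rightarrow> 'a \<Rightarrow> bool) \<Rightarrow> real \<Rightarrow> 'a \<Rightarrow> 'a \<Rightarrow> complex" where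
  "transition V E t x y = (\<Sum>k. (- \<i> * complex_of_real t) ^ k / of_nat (fact k) * complex_of_real (adj_pow V E k x y))"

definition pgst :: "'a set \<Rightarrow> ('a \<Rightarrow> 'a \<Rightarrow> bool) \<Rightarrow> 'a \<Rightarrow> 'a \<Rightarrow> bool" where
  "pgst V E x y \<longleftrightarrow> (\<forall>\<epsilon>>0. \<exists>t::real. \<bar>cmod (transition V E t x y) - 1\<bar> < \<epsilon>)"

end

theory Submission
  imports Defs "HOL-Analysis.Kronecker_Approximation_Theorem" "HOL-Computational_Algebra.Primes"
begin

text \<open>
  Both factors have explicit spectral decompositions, and the transition matrix of a Cartesian
  product is the product of the transition matrices of the factors. The eigenvalues of
  NEPS(P_2; \<Omega>') are integers, so its transition matrix is 2\<pi>-periodic; when all weights in \<Omega>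
  are odd, those of NEPS(P_3; \<Omega>) are sqrt 2 times integers, so its transition matrix is
  \<pi> sqrt 2-periodic. If the sum of \<Omega>' is nonzero, NEPS(P_2; \<Omega>') has perfect state transfer
  from 0 to that sum at the times \<pi>/2 + 2\<pi>M. If the sum of the tuples of minimal weight k in \<Omega>
  has a nonzero entry j, NEPS(P_3; \<Omega>) has perfect state transfer at the odd multiples of
  \<pi>/sqrt 2^k between the two vertices that are 1 off j and 0 resp. 2 at j. In both cases the
  ratio of the transfer period to the period of the other factor is irrational, so by Kronecker's
  theorem the other factor comes arbitrarily close to the identity at some transfer time.
\<close>

section \<open>Spectral decompositions and transition matrices\<close>

text \<open>The P j need not be orthogonal projections:
  resolving the identity and being eigenmatrices of the adjacency matrix is all that is used.\<close>
definition spectral_decomposition ::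
    "'a set \<Rightarrow> ('a \<Rightarrow> 'a \<Rightarrow> bool) \<Rightarrow> 'j set \<Rightarrow> ('j \<Rightarrow> 'a \<Rightarrow> 'a \<Rightarrow> real) \<Rightarrow> ('j \<Rightarrow> real) \<Rightarrow> bool" where
  "spectral_decomposition V E J P ev \<longleftrightarrow> finite V \<and> finite J \<and>
     (\<forall>x\<in>V. \<forall>y\<in>V. (\<Sum>j\<in>J. P j x y) = (if x = y then 1 else 0)) \<and>
     (\<forall>j\<in>J. \<forall>x\<in>V. \<forall>y\<in>V. (\<Sum>z\<in>V. (if E x z then 1 else 0) * P j z y) = ev j * P j x y)"

lemma spectral_decompositionI:
  assumes "finite V" "finite J"
    and "\<And>x y. x \<in> V \<Longrightarrow> y \<in> V \<Longrightarrow> (\<Sum>j\<in>J. P j x y) = (if x = y then 1 else 0)"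
    and "\<And>j x y. j \<in> J \<Longrightarrow> x \<in> V \<Longrightarrow> y \<in> V \<Longrightarrow>
           (\<Sum>z\<in>V. (if E x z then 1 else 0) * P j z y) = ev j * P j x y"
  shows "spectral_decomposition V E J P ev"
  using assms unfolding spectral_decomposition_def by blast

lemma cis_add_2pi_int: "cis (x + 2 * pi * of_int n) = cis x"
  by (simp add: cis_mult[symmetric])

context
  fixes V E J P ev
  assumes dec: "spectral_decomposition V E J P ev"
begin

lemma spectral_finite: "finite V" "finite J"
  using dec by (auto simp: spectral_decomposition_def)

lemma spectral_resolution: "x \<in> V \<Longrightarrow> y \<in> V \<Longrightarrow> (\<Sum>j\<in>J. P j x y) = (if x = y then 1 else 0)"
  using dec by (auto simp: spectral_decomposition_def)

lemma spectral_eigen: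
  "j \<in> J \<Longrightarrow> x \<in> V \<Longrightarrow> y \<in> V \<Longrightarrow> (\<Sum>z\<in>V. (if E x z then 1 else 0) * P j z y) = ev j * P j x y"
  using dec by (auto simp: spectral_decomposition_def)

lemma adj_pow_spectral:
  "x \<in> V \<Longrightarrow> y \<in> V \<Longrightarrow> adj_pow V E k x y = (\<Sum>j\<in>J. ev j ^ k * P j x y)"
proof (induction k arbitrary: x)
  case 0
  then show ?case by (simp add: spectral_resolution)
next
  case (Suc k)
  have "adj_pow V E (Suc k) x y = (\<Sum>z\<in>V. (if E x z then 1 else 0) * (\<Sum>j\<in>J. ev j ^ k * P j z y))"
    using Suc by simp
  also have "\<dots> = (\<Sum>j\<in>J. ev j ^ k * (\<Sum>z\<in>V. (if E x z then 1 else 0) * P j z y))"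
    by (simp add: sum_distrib_left sum_distrib_right mult_ac sum.swap[of _ V])
  also have "\<dots> = (\<Sum>j\<in>J. ev j ^ Suc k * P j x y)"
    using Suc.prems by (intro sum.cong) (auto simp: spectral_eigen)
  finally show ?case .
qed

lemma transition_spectral:
  assumes "x \<in> V" "y \<in> V"
  shows "transition V E t x y = (\<Sum>j\<in>J. cis (- (t * ev j)) * complex_of_real (P j x y))"
proof -
  have term_eq: "(- \<i> * complex_of_real t) ^ k / of_nat (fact k) * complex_of_real (adj_pow V E k x y)
     = (\<Sum>j\<in>J. complex_of_real (P j x y) * ((- \<i> * complex_of_real (t * ev j)) ^ k /\<^sub>R fact k))" for k
  proof -
    have "(- \<i> * complex_of_real (t * ev j)) ^ k = complex_of_real (ev j) ^ k * (- \<i> * complex_of_real t) ^ k" for j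
      by (simp add: power_mult_distrib[symmetric] mult_ac)
    then show ?thesis
      by (simp add: adj_pow_spectral[OF assms] sum_distrib_left scaleR_conv_of_real divide_inverse mult_ac)
  qed
  have "(\<lambda>k. \<Sum>j\<in>J. complex_of_real (P j x y) * ((- \<i> * complex_of_real (t * ev j)) ^ k /\<^sub>R fact k))
     sums (\<Sum>j\<in>J. complex_of_real (P j x y) * exp (- \<i> * complex_of_real (t * ev j)))"
    by (intro sums_sum sums_mult exp_converges)
  then have "transition V E t x y = (\<Sum>j\<in>J. complex_of_real (P j x y) * exp (- \<i> * complex_of_real (t * ev j)))"
    unfolding transition_def term_eq by (rule sums_unique[symmetric])
  also have "\<dots> = (\<Sum>j\<in>J. cis (- (t * ev j)) * complex_of_real (P j x y))"
    by (intro sum.cong) (auto simp: cis_conv_exp mult_ac)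
  finally show ?thesis .
qed

lemma transition_at_0: "x \<in> V \<Longrightarrow> transition V E 0 x x = 1"
  by (simp add: transition_spectral spectral_resolution flip: of_real_sum)

lemma isCont_transition: "x \<in> V \<Longrightarrow> y \<in> V \<Longrightarrow> isCont (\<lambda>t. transition V E t x y) t0"
  by (simp add: transition_spectral cis_conv_exp)

lemma transition_periodic:
  fixes N :: int
  assumes int_eig: "\<And>j. j \<in> J \<Longrightarrow> \<exists>z::int. ev j = c * z" and "c \<noteq> 0"
    and "x \<in> V" "y \<in> V"
  shows "transition V E (t + 2 * pi / c * of_int N) x y = transition V E t x y"
proof -
  have "cis (- ((t + 2 * pi / c * of_int N) * ev j)) = cis (- (t * ev j))" if j: "j \<in> J" for j
  proof -
    obtain z :: int where z: "ev j = c * z" using int_eig[OF j] by blast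
    have "- ((t + 2 * pi / c * of_int N) * ev j) = - (t * ev j) + 2 * pi * of_int (- N * z)"
      using \<open>c \<noteq> 0\<close> by (simp add: z field_simps)
    then show ?thesis by (simp only: cis_add_2pi_int)
  qed
  then show ?thesis using assms by (simp add: transition_spectral)
qed

end

section \<open>Cartesian products and NEPS\<close>

lemma cart_adj_indicator:
  assumes "irreflp E1"
  shows "(if cart_adj E1 E2 (u1, u2) (z1, z2) then 1 else 0 :: real) =
    (if E1 u1 z1 then 1 else 0) * (if u2 = z2 then 1 else 0) + (if u1 = z1 then 1 else 0) * (if E2 u2 z2 then 1 else 0)"
  using assms by (auto simp: cart_adj_def irreflp_def)

lemma spectral_decomposition_cart:
  assumes d1: "spectral_decomposition V1 E1 J1 P1 ev1" and d2: "spectral_decomposition V2 E2 J2 P2 ev2"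
    and irr: "irreflp E1"
  shows "spectral_decomposition (V1 \<times> V2) (cart_adj E1 E2) (J1 \<times> J2)
    (\<lambda>j u v. P1 (fst j) (fst u) (fst v) * P2 (snd j) (snd u) (snd v)) (\<lambda>j. ev1 (fst j) + ev2 (snd j))"
proof (rule spectral_decompositionI)
  show "finite (V1 \<times> V2)" "finite (J1 \<times> J2)"
    using d1 d2 by (simp_all add: spectral_finite)
next
  fix u v assume uv: "u \<in> V1 \<times> V2" "v \<in> V1 \<times> V2"
  have "(\<Sum>j\<in>J1 \<times> J2. P1 (fst j) (fst u) (fst v) * P2 (snd j) (snd u) (snd v))
      = (\<Sum>a\<in>J1. P1 a (fst u) (fst v)) * (\<Sum>b\<in>J2. P2 b (snd u) (snd v))"
    by (simp add: sum_product sum.cartesian_product case_prod_unfold)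
  then show "(\<Sum>j\<in>J1 \<times> J2. P1 (fst j) (fst u) (fst v) * P2 (snd j) (snd u) (snd v)) = (if u = v then 1 else 0)"
    using uv by (auto simp: prod_eq_iff spectral_resolution[OF d1] spectral_resolution[OF d2])
next
  fix j u v assume "j \<in> J1 \<times> J2" "u \<in> V1 \<times> V2" "v \<in> V1 \<times> V2"
  then obtain a b u1 u2 v1 v2 where j: "j = (a, b)" "a \<in> J1" "b \<in> J2"
    and uv: "u = (u1, u2)" "v = (v1, v2)" "u1 \<in> V1" "u2 \<in> V2" "v1 \<in> V1" "v2 \<in> V2"
    by auto
  have "(\<Sum>z\<in>V1 \<times> V2. (if cart_adj E1 E2 u z then 1 else 0) * (P1 a (fst z) v1 * P2 b (snd z) v2))
      = (\<Sum>z1\<in>V1. \<Sum>z2\<in>V2. (if E1 u1 z1 then 1 else 0) * P1 a z1 v1 * ((if u2 = z2 then 1 else 0) * P2 b z2 v2)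
          + (if u1 = z1 then 1 else 0) * P1 a z1 v1 * ((if E2 u2 z2 then 1 else 0) * P2 b z2 v2))"
    unfolding sum.cartesian_product uv
  proof (intro sum.cong refl, clarify)
    fix z1 z2
    show "(if cart_adj E1 E2 (u1, u2) (z1, z2) then 1 else 0) * (P1 a (fst (z1, z2)) v1 * P2 b (snd (z1, z2)) v2) =
      (if E1 u1 z1 then 1 else 0) * P1 a z1 v1 * ((if u2 = z2 then 1 else 0) * P2 b z2 v2)
      + (if u1 = z1 then 1 else 0) * P1 a z1 v1 * ((if E2 u2 z2 then 1 else 0) * P2 b z2 v2)"
      unfolding cart_adj_indicator[OF irr] fst_conv snd_conv by algebra
  qed
  also have "\<dots> = (\<Sum>z1\<in>V1. (if E1 u1 z1 then 1 else 0) * P1 a z1 v1) * (\<Sum>z2\<in>V2. (if u2 = z2 then 1 else 0) * P2 b z2 v2)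
      + (\<Sum>z1\<in>V1. (if u1 = z1 then 1 else 0) * P1 a z1 v1) * (\<Sum>z2\<in>V2. (if E2 u2 z2 then 1 else 0) * P2 b z2 v2)"
    by (simp only: sum.distrib sum_product)
  also have "\<dots> = (\<Sum>z1\<in>V1. (if E1 u1 z1 then 1 else 0) * P1 a z1 v1) * P2 b u2 v2
      + P1 a u1 v1 * (\<Sum>z2\<in>V2. (if E2 u2 z2 then 1 else 0) * P2 b z2 v2)"
    using uv spectral_finite[OF d1] spectral_finite[OF d2]
    by (simp add: if_distrib[of "\<lambda>c. c * _"] cong: if_cong)
  also have "\<dots> = (ev1 a + ev2 b) * (P1 a u1 v1 * P2 b u2 v2)"
    by (simp only: spectral_eigen[OF d1 j(2) uv(3,5)] spectral_eigen[OF d2 j(3) uv(4,6)])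
       (simp add: algebra_simps)
  finally show "(\<Sum>z\<in>V1 \<times> V2. (if cart_adj E1 E2 u z then 1 else 0) *
      (P1 (fst j) (fst z) (fst v) * P2 (snd j) (snd z) (snd v))) =
      (ev1 (fst j) + ev2 (snd j)) * (P1 (fst j) (fst u) (fst v) * P2 (snd j) (snd u) (snd v))"
    using j uv by simp
qed

lemma transition_cart:
  assumes d1: "spectral_decomposition V1 E1 J1 P1 ev1" and d2: "spectral_decomposition V2 E2 J2 P2 ev2"
    and irr: "irreflp E1"
    and "x \<in> V1" "x' \<in> V1" "y \<in> V2" "y' \<in> V2"
  shows "transition (V1 \<times> V2) (cart_adj E1 E2) t (x, y) (x', y') = transition V1 E1 t x x' * transition V2 E2 t y y'"
  using assms spectral_finite[OF d1] spectral_finite[OF d2]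
  by (simp add: transition_spectral[OF spectral_decomposition_cart[OF d1 d2 irr]]
      transition_spectral[OF d1] transition_spectral[OF d2] sum_product sum.cartesian_product
      case_prod_unfold mult_ac)
     (intro sum.cong refl, simp add: cis_mult algebra_simps)

lemma neps_verts_Suc: "neps_verts k (Suc m) = (\<lambda>(c, z). c # z) ` ({..<k} \<times> neps_verts k m)"
proof (rule set_eqI)
  fix xs show "xs \<in> neps_verts k (Suc m) \<longleftrightarrow> xs \<in> (\<lambda>(c, z). c # z) ` ({..<k} \<times> neps_verts k m)"
    by (cases xs) (auto simp: neps_verts_def image_iff)
qed

lemma finite_neps_verts: "finite (neps_verts k m)"
proof -
  have "neps_verts k m = {xs. set xs \<subseteq> {..<k} \<and> length xs = m}"
    by (auto simp: neps_verts_def)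
  then show ?thesis using finite_lists_length_eq[of "{..<k}" m] by simp
qed

lemma sum_neps_verts_prod:
  "(\<Sum>z\<in>neps_verts k m. \<Prod>i<m. f i (z ! i)) = (\<Prod>i<m. \<Sum>c<k. (f i c :: 'a::comm_semiring_1))"
proof (induction m arbitrary: f)
  case 0
  have "neps_verts k 0 = {[]}" by (auto simp: neps_verts_def)
  then show ?case by simp
next
  case (Suc m)
  have inj: "inj_on (\<lambda>(c, z). c # z) ({..<k} \<times> neps_verts k m)"
    by (auto simp: inj_on_def)
  have "(\<Sum>z\<in>neps_verts k (Suc m). \<Prod>i<Suc m. f i (z ! i))
      = (\<Sum>(c, z)\<in>{..<k} \<times> neps_verts k m. f 0 c * (\<Prod>i<m. f (Suc i) (z ! i)))"
    unfolding neps_verts_Suc sum.reindex[OF inj]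
    by (intro sum.cong refl) (auto simp: prod.lessThan_Suc_shift simp del: prod.lessThan_Suc)
  also have "\<dots> = (\<Sum>c<k. f 0 c) * (\<Sum>z\<in>neps_verts k m. \<Prod>i<m. f (Suc i) (z ! i))"
    by (simp add: sum.cartesian_product[symmetric] sum_product)
  also have "\<dots> = (\<Sum>c<k. f 0 c) * (\<Prod>i<m. \<Sum>c<k. f (Suc i) c)"
    using Suc.IH[of "\<lambda>i. f (Suc i)"] by simp
  also have "\<dots> = (\<Prod>i<Suc m. \<Sum>c<k. f i c)"
    by (simp add: prod.lessThan_Suc_shift del: prod.lessThan_Suc)
  finally show ?case .
qed

lemma prod_indicator:
  "finite A \<Longrightarrow> (\<Prod>i\<in>A. if R i then 1 else 0 :: 'a::comm_semiring_1) = (if \<forall>i\<in>A. R i then 1 else 0)"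
  by (induction A rule: finite_induct) auto

definition neps_proj :: "(nat \<Rightarrow> nat \<Rightarrow> nat \<Rightarrow> real) \<Rightarrow> nat \<Rightarrow> nat list \<Rightarrow> nat list \<Rightarrow> nat list \<Rightarrow> real" where
  "neps_proj p m a x w = (\<Prod>i<m. p (a ! i) (x ! i) (w ! i))"

definition neps_eigenvalue :: "(nat \<Rightarrow> real) \<Rightarrow> bool list set \<Rightarrow> nat \<Rightarrow> nat list \<Rightarrow> real" where
  "neps_eigenvalue ev \<Omega> m a = (\<Sum>\<beta>\<in>\<Omega>. \<Prod>i<m. if \<beta> ! i then ev (a ! i) else 1)"

lemma neps_adj_indicator:
  assumes irr: "irreflp G" and \<Omega>: "\<Omega> \<subseteq> {\<beta>. length \<beta> = m}" "finite \<Omega>"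
  shows "(if neps_adj G \<Omega> x z then 1 else 0) =
    (\<Sum>\<beta>\<in>\<Omega>. \<Prod>i<m. if \<beta> ! i then (if G (x ! i) (z ! i) then 1 else 0) else (if x ! i = z ! i then 1 else 0 :: real))"
proof -
  define fits where "fits \<beta> \<longleftrightarrow> (\<forall>i<m. (\<not> \<beta> ! i \<longrightarrow> x ! i = z ! i) \<and> (\<beta> ! i \<longrightarrow> G (x ! i) (z ! i)))" for \<beta>
  have prod_eq: "(\<Prod>i<m. if \<beta> ! i then (if G (x ! i) (z ! i) then 1 else 0) else (if x ! i = z ! i then 1 else 0 :: real))
      = (if fits \<beta> then 1 else 0)" for \<beta>
  proof -
    have "(\<Prod>i<m. if \<beta> ! i then (if G (x ! i) (z ! i) then 1 else 0) else (if x ! i = z ! i then 1 else 0 :: real))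
      = (\<Prod>i<m. if (\<not> \<beta> ! i \<longrightarrow> x ! i = z ! i) \<and> (\<beta> ! i \<longrightarrow> G (x ! i) (z ! i)) then 1 else 0)"
      by (intro prod.cong) auto
    then show ?thesis by (auto simp: prod_indicator fits_def)
  qed
  \<comment> \<open>Irreflexivity of G makes the fitting tuple unique: it is the support of x - z.\<close>
  have uniq: "\<beta> = \<beta>'" if "\<beta> \<in> \<Omega>" "\<beta>' \<in> \<Omega>" "fits \<beta>" "fits \<beta>'" for \<beta> \<beta>'
  proof (rule nth_equalityI)
    show "length \<beta> = length \<beta>'" using that \<Omega> by auto
    fix i assume "i < length \<beta>"
    then have "i < m" using that \<Omega> by auto
    then show "\<beta> ! i = \<beta>' ! i" using that irr unfolding fits_def irreflp_def by metis
  qed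
  have "neps_adj G \<Omega> x z \<longleftrightarrow> (\<exists>\<beta>\<in>\<Omega>. fits \<beta>)"
    unfolding neps_adj_def fits_def using \<Omega> by auto
  moreover have "(\<Sum>\<beta>\<in>\<Omega>. if fits \<beta> then 1 else 0 :: real) = (if \<exists>\<beta>\<in>\<Omega>. fits \<beta> then 1 else 0)"
  proof (cases "\<exists>\<beta>\<in>\<Omega>. fits \<beta>")
    case True
    then obtain \<beta>\<^sub>0 where \<beta>\<^sub>0: "\<beta>\<^sub>0 \<in> \<Omega>" "fits \<beta>\<^sub>0" by blast
    then have "(\<Sum>\<beta>\<in>\<Omega>. if fits \<beta> then 1 else 0 :: real) = (\<Sum>\<beta>\<in>\<Omega>. if \<beta> = \<beta>\<^sub>0 then 1 else 0)"
      using uniq by (intro sum.cong) auto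
    then show ?thesis using True \<beta>\<^sub>0 \<Omega>(2) by simp
  qed simp
  ultimately show ?thesis unfolding prod_eq by simp
qed

lemma spectral_decomposition_neps:
  assumes dec: "spectral_decomposition {..<K} G {..<K} p ev" and irr: "irreflp G"
    and \<Omega>: "\<Omega> \<subseteq> {\<beta>. length \<beta> = m}" "finite \<Omega>"
  shows "spectral_decomposition (neps_verts K m) (neps_adj G \<Omega>) (neps_verts K m) (neps_proj p m) (neps_eigenvalue ev \<Omega> m)"
proof (rule spectral_decompositionI)
  show "finite (neps_verts K m)" "finite (neps_verts K m)"
    by (rule finite_neps_verts)+
next
  fix x w assume xw: "x \<in> neps_verts K m" "w \<in> neps_verts K m"
  have "(\<Sum>a\<in>neps_verts K m. neps_proj p m a x w) = (\<Prod>i<m. \<Sum>c<K. p c (x ! i) (w ! i))"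
    unfolding neps_proj_def by (rule sum_neps_verts_prod)
  also have "\<dots> = (\<Prod>i<m. if x ! i = w ! i then 1 else 0)"
    using xw by (intro prod.cong refl spectral_resolution[OF dec]) (auto simp: neps_verts_def)
  also have "\<dots> = (if x = w then 1 else 0)"
    using xw by (auto simp: prod_indicator neps_verts_def intro: nth_equalityI)
  finally show "(\<Sum>a\<in>neps_verts K m. neps_proj p m a x w) = (if x = w then 1 else 0)" .
next
  fix a x w assume a: "a \<in> neps_verts K m" and x: "x \<in> neps_verts K m" and w: "w \<in> neps_verts K m"
  define h where "h \<beta> i c = (if \<beta> ! i then (if G (x ! i) c then 1 else 0) else (if x ! i = c then 1 else 0 :: real))"
    for \<beta> i c
  have "(\<Sum>z\<in>neps_verts K m. (if neps_adj G \<Omega> x z then 1 else 0) * neps_proj p m a z w)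
     = (\<Sum>z\<in>neps_verts K m. \<Sum>\<beta>\<in>\<Omega>. \<Prod>i<m. h \<beta> i (z ! i) * p (a ! i) (z ! i) (w ! i))"
    by (simp add: neps_adj_indicator[OF irr \<Omega>] h_def neps_proj_def sum_distrib_right prod.distrib)
  also have "\<dots> = (\<Sum>\<beta>\<in>\<Omega>. \<Prod>i<m. \<Sum>c<K. h \<beta> i c * p (a ! i) c (w ! i))"
    by (subst sum.swap) (intro sum.cong refl sum_neps_verts_prod)
  also have "\<dots> = (\<Sum>\<beta>\<in>\<Omega>. \<Prod>i<m. (if \<beta> ! i then ev (a ! i) else 1) * p (a ! i) (x ! i) (w ! i))"
  proof (intro sum.cong prod.cong refl)
    fix \<beta> i assume "i \<in> {..<m}"
    then have lt: "a ! i < K" "x ! i < K" "w ! i < K" using a x w by (auto simp: neps_verts_def)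
    show "(\<Sum>c<K. h \<beta> i c * p (a ! i) c (w ! i)) = (if \<beta> ! i then ev (a ! i) else 1) * p (a ! i) (x ! i) (w ! i)"
    proof (cases "\<beta> ! i")
      case True
      then show ?thesis using spectral_eigen[OF dec, of "a ! i" "x ! i" "w ! i"] lt by (simp add: h_def)
    next
      case False
      then show ?thesis using lt by (simp add: h_def if_distrib[of "\<lambda>c. c * _"] cong: if_cong)
    qed
  qed
  also have "\<dots> = neps_eigenvalue ev \<Omega> m a * neps_proj p m a x w"
    by (simp add: neps_eigenvalue_def neps_proj_def prod.distrib sum_distrib_right)
  finally show "(\<Sum>z\<in>neps_verts K m. (if neps_adj G \<Omega> x z then 1 else 0) * neps_proj p m a z w)
      = neps_eigenvalue ev \<Omega> m a * neps_proj p m a x w" .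
qed

lemma irreflp_neps_adj:
  assumes "irreflp G" and "\<And>\<beta>. \<beta> \<in> \<Omega> \<Longrightarrow> \<exists>i<length \<beta>. \<beta> ! i"
  shows "irreflp (neps_adj G \<Omega>)"
  using assms unfolding neps_adj_def irreflp_def by blast

section \<open>The paths P_3 and P_2\<close>

lemma irreflp_path_adj: "irreflp (path_adj k)"
  by (simp add: irreflp_def path_adj_def)

lemma lessThan_3: "{..<3::nat} = {0, 1, 2}" and lessThan_2: "{..<2::nat} = {0, 1}"
  by auto

text \<open>Orthonormal eigenvectors of P_3 for the eigenvalues sqrt 2, 0 and - sqrt 2.\<close>
definition path3_eigvec :: "nat \<Rightarrow> nat \<Rightarrow> real" where
  "path3_eigvec c x = (if c = 0 then (if x = 1 then sqrt 2 / 2 else 1 / 2)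
     else if c = 1 then (if x = 0 then sqrt 2 / 2 else if x = 2 then - sqrt 2 / 2 else 0)
     else (if x = 1 then - sqrt 2 / 2 else 1 / 2))"

definition path3_proj :: "nat \<Rightarrow> nat \<Rightarrow> nat \<Rightarrow> real" where
  "path3_proj c x w = path3_eigvec c x * path3_eigvec c w"

definition path3_eigval :: "nat \<Rightarrow> real" where
  "path3_eigval c = sqrt 2 * (1 - real c)"

definition path2_proj :: "nat \<Rightarrow> nat \<Rightarrow> nat \<Rightarrow> real" where
  "path2_proj c y w = (if c = 0 then 1 / 2 else if y = w then 1 / 2 else - 1 / 2)"

definition path2_eigval :: "nat \<Rightarrow> real" where
  "path2_eigval c = (if c = 0 then 1 else - 1)"

lemma spectral_decomposition_path3: "spectral_decomposition {..<3} (path_adj 3) {..<3} path3_proj path3_eigval"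
proof (rule spectral_decompositionI)
  fix x y assume "x \<in> {..<3::nat}" "y \<in> {..<3::nat}"
  then show "(\<Sum>c\<in>{..<3}. path3_proj c x y) = (if x = y then 1 else 0)"
    unfolding lessThan_3 by (auto simp: path3_proj_def path3_eigvec_def)
next
  fix c x y assume "c \<in> {..<3::nat}" "x \<in> {..<3::nat}" "y \<in> {..<3::nat}"
  then show "(\<Sum>z\<in>{..<3}. (if path_adj 3 x z then 1 else 0) * path3_proj c z y) = path3_eigval c * path3_proj c x y"
    unfolding lessThan_3 by (auto simp: path_adj_def path3_proj_def path3_eigvec_def path3_eigval_def algebra_simps)
qed simp_all

lemma spectral_decomposition_path2: "spectral_decomposition {..<2} (path_adj 2) {..<2} path2_proj path2_eigval"
proof (rule spectral_decompositionI)
  fix x y assume "x \<in> {..<2::nat}" "y \<in> {..<2::nat}"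
  then show "(\<Sum>c\<in>{..<2}. path2_proj c x y) = (if x = y then 1 else 0)"
    unfolding lessThan_2 by (auto simp: path2_proj_def)
next
  fix c x y assume "c \<in> {..<2::nat}" "x \<in> {..<2::nat}" "y \<in> {..<2::nat}"
  then show "(\<Sum>z\<in>{..<2}. (if path_adj 2 x z then 1 else 0) * path2_proj c z y) = path2_eigval c * path2_proj c x y"
    unfolding lessThan_2 by (auto simp: path_adj_def path2_proj_def path2_eigval_def)
qed simp_all

section \<open>Perfect state transfer in the factors\<close>

lemma prod_if_const: "finite A \<Longrightarrow> (\<Prod>x\<in>A. if P x then c else 1) = c ^ card {x\<in>A. P x}"
  by (simp add: prod.inter_filter[symmetric])

lemma cis_sum: "finite A \<Longrightarrow> cis (\<Sum>x\<in>A. f x) = (\<Prod>x\<in>A. cis (f x))"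
  by (induction A rule: finite_induct) (auto simp: cis_mult[symmetric])

lemma neps_eigenvalue_path2_int: "\<exists>z::int. neps_eigenvalue path2_eigval \<Omega> n b = 1 * of_int z"
proof -
  have "neps_eigenvalue path2_eigval \<Omega> n b \<in> \<int>"
    unfolding neps_eigenvalue_def by (intro Ints_sum Ints_prod) (auto simp: path2_eigval_def)
  then show ?thesis by (auto elim: Ints_cases)
qed

lemma cis_neps_eigenvalue_path2:
  fixes M :: int
  assumes "finite \<Omega>"
  shows "cis (- ((pi / 2 + 2 * pi * M) * neps_eigenvalue path2_eigval \<Omega> n b))
    = (- \<i>) ^ card \<Omega> * complex_of_real (\<Prod>j<n. path2_eigval (b ! j) ^ card {\<beta>\<in>\<Omega>. \<beta> ! j})"
proof -
  define \<sigma> where "\<sigma> \<beta> = (\<Prod>j<n. if \<beta> ! j then path2_eigval (b ! j) else 1)" for \<beta>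
  have \<sigma>_sign: "\<sigma> \<beta> = 1 \<or> \<sigma> \<beta> = - 1" for \<beta>
  proof -
    have "(\<sigma> \<beta>)\<^sup>2 = 1"
      unfolding \<sigma>_def prod_power_distrib by (intro prod.neutral) (auto simp: path2_eigval_def)
    then show ?thesis by (simp add: power2_eq_1_iff)
  qed
  have "cis (- ((pi / 2 + 2 * pi * M) * s)) = - \<i> * complex_of_real s" if "s = 1 \<or> s = - 1" for s
    using that cis_add_2pi_int[of "pi / 2" M] cis_add_2pi_int[of "- (pi / 2)" "- M"]
    by (auto simp: algebra_simps)
  then have "cis (- ((pi / 2 + 2 * pi * M) * neps_eigenvalue path2_eigval \<Omega> n b))
      = (\<Prod>\<beta>\<in>\<Omega>. - \<i> * complex_of_real (\<sigma> \<beta>))"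
    using assms \<sigma>_sign by (simp add: neps_eigenvalue_def \<sigma>_def sum_distrib_left cis_sum flip: sum_negf)
  also have "\<dots> = (- \<i>) ^ card \<Omega> * complex_of_real (\<Prod>\<beta>\<in>\<Omega>. \<sigma> \<beta>)"
    by (simp only: prod.distrib prod_constant of_real_prod)
  also have "(\<Prod>\<beta>\<in>\<Omega>. \<sigma> \<beta>) = (\<Prod>j<n. \<Prod>\<beta>\<in>\<Omega>. if \<beta> ! j then path2_eigval (b ! j) else 1)"
    unfolding \<sigma>_def by (rule prod.swap)
  also have "\<dots> = (\<Prod>j<n. path2_eigval (b ! j) ^ card {\<beta>\<in>\<Omega>. \<beta> ! j})"
    using assms by (simp add: prod_if_const)
  finally show ?thesis .
qed

lemma transition_neps_path2_half_pi:
  fixes M :: int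
  assumes \<Omega>: "\<Omega> \<subseteq> {\<beta>. length \<beta> = n}" "finite \<Omega>"
  defines "y' \<equiv> map (\<lambda>j. if odd (card {\<beta>\<in>\<Omega>. \<beta> ! j}) then 1 else 0) [0..<n]"
  shows "transition (neps_verts 2 n) (neps_adj (path_adj 2) \<Omega>) (pi / 2 + 2 * pi * M) (replicate n 0) y'
    = (- \<i>) ^ card \<Omega>"
proof -
  define d where "d j = card {\<beta>\<in>\<Omega>. \<beta> ! j}" for j
  have verts: "replicate n 0 \<in> neps_verts 2 n" "y' \<in> neps_verts 2 n"
    by (auto simp: neps_verts_def y'_def)
  have "transition (neps_verts 2 n) (neps_adj (path_adj 2) \<Omega>) (pi / 2 + 2 * pi * M) (replicate n 0) y'
     = (\<Sum>b\<in>neps_verts 2 n. (- \<i>) ^ card \<Omega> *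
          complex_of_real (\<Prod>j<n. path2_eigval (b ! j) ^ d j * path2_proj (b ! j) 0 (y' ! j)))"
    unfolding transition_spectral[OF spectral_decomposition_neps[OF spectral_decomposition_path2
          irreflp_path_adj \<Omega>] verts]
    by (intro sum.cong refl, subst cis_neps_eigenvalue_path2[OF \<Omega>(2)]) (simp add: neps_proj_def prod.distrib d_def mult_ac)
  also have "\<dots> = (- \<i>) ^ card \<Omega> * complex_of_real (\<Prod>j<n. \<Sum>c<2. path2_eigval c ^ d j * path2_proj c 0 (y' ! j))"
    by (simp only: sum_distrib_left[symmetric] of_real_sum[symmetric]
        sum_neps_verts_prod[where f = "\<lambda>j c. path2_eigval c ^ d j * path2_proj c 0 (y' ! j)"])
  also have "(\<Prod>j<n. \<Sum>c<2. path2_eigval c ^ d j * path2_proj c 0 (y' ! j)) = 1"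
    by (intro prod.neutral) (auto simp: y'_def d_def lessThan_2 path2_eigval_def path2_proj_def)
  finally show ?thesis by simp
qed

lemma cis_pi_int: "cis (pi * of_int z) = (if even z then 1 else - 1)"
  by (simp add: complex_eq_iff)

lemma hamming_eq_card: "length \<beta> = m \<Longrightarrow> hamming \<beta> = card {i\<in>{..<m}. \<beta> ! i}"
  unfolding hamming_def length_filter_conv_card by (auto intro: arg_cong[where f = card])

lemma path3_eigval_prod:
  assumes "length \<beta> = m"
  shows "(\<Prod>i<m. if \<beta> ! i then path3_eigval (a ! i) else 1)
    = sqrt 2 ^ hamming \<beta> * of_int (\<Prod>i<m. if \<beta> ! i then 1 - int (a ! i) else 1)"
proof -
  have "(\<Prod>i<m. if \<beta> ! i then path3_eigval (a ! i) else 1)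
      = (\<Prod>i<m. (if \<beta> ! i then sqrt 2 else 1) * of_int (if \<beta> ! i then 1 - int (a ! i) else 1))"
    by (intro prod.cong) (auto simp: path3_eigval_def)
  then show ?thesis
    by (simp add: prod.distrib prod_if_const hamming_eq_card[OF assms] of_int_prod)
qed

lemma neps_eigenvalue_path3_sqrt2:
  assumes "\<Omega> \<subseteq> {\<beta>. length \<beta> = m}" and "\<forall>\<beta>\<in>\<Omega>. odd (hamming \<beta>)"
  shows "\<exists>z::int. neps_eigenvalue path3_eigval \<Omega> m a = sqrt 2 * of_int z"
proof
  have "sqrt 2 ^ h = sqrt 2 * 2 ^ (h div 2)" if "odd h" for h
    using that by (auto elim!: oddE simp: power_add power_mult)
  then show "neps_eigenvalue path3_eigval \<Omega> m a
      = sqrt 2 * of_int (\<Sum>\<beta>\<in>\<Omega>. 2 ^ (hamming \<beta> div 2) * (\<Prod>i<m. if \<beta> ! i then 1 - int (a ! i) else 1))"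
    using assms by (auto simp: neps_eigenvalue_def sum_distrib_left path3_eigval_prod intro!: sum.cong)
qed

context
  fixes \<Omega> :: "bool list set" and m k :: nat
  assumes \<Omega>_len: "\<Omega> \<subseteq> {\<beta>. length \<beta> = m}" and \<Omega>_fin: "finite \<Omega>"
    and weights: "\<forall>\<beta>\<in>\<Omega>. odd (hamming \<beta>) \<and> k \<le> hamming \<beta>" and "odd k"
begin

lemma cis_path3_term:
  fixes M :: int
  assumes \<beta>: "\<beta> \<in> \<Omega>" and a: "a \<in> neps_verts 3 m"
  shows "cis (- (pi / sqrt 2 ^ k * (2 * M + 1) * (\<Prod>i<m. if \<beta> ! i then path3_eigval (a ! i) else 1)))
    = (if hamming \<beta> = k \<and> (\<forall>i<m. \<beta> ! i \<longrightarrow> a ! i \<noteq> 1) then - 1 else 1)"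
proof -
  define E where "E = (\<Prod>i<m. if \<beta> ! i then 1 - int (a ! i) else 1)"
  have "even (hamming \<beta> - k)" using weights \<beta> \<open>odd k\<close> by auto
  then obtain r where r: "hamming \<beta> = k + 2 * r" using weights \<beta> by (metis evenE le_add_diff_inverse)
  have arg: "- (pi / sqrt 2 ^ k * (2 * M + 1) * (\<Prod>i<m. if \<beta> ! i then path3_eigval (a ! i) else 1))
      = pi * of_int (- ((2 * M + 1) * 2 ^ r * E))"
    using \<beta> \<Omega>_len by (auto simp: path3_eigval_prod E_def r power_add power_mult)
  have "cis (- (pi / sqrt 2 ^ k * (2 * M + 1) * (\<Prod>i<m. if \<beta> ! i then path3_eigval (a ! i) else 1)))
      = (if r = 0 \<and> odd E then - 1 else 1)"
    unfolding arg cis_pi_int by simp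
  moreover have "even E \<longleftrightarrow> (\<exists>i<m. \<beta> ! i \<and> a ! i = 1)"
  proof -
    have "even (1 - int c) \<longleftrightarrow> c = 1" if "c < 3" for c
      using that by (auto simp: less_Suc_eq numeral_3_eq_3)
    then show ?thesis using a by (auto simp: E_def even_prod_iff neps_verts_def)
  qed
  ultimately show ?thesis by (auto simp: r)
qed

lemma cis_neps_eigenvalue_path3:
  fixes M :: int
  assumes "a \<in> neps_verts 3 m"
  shows "cis (- (pi / sqrt 2 ^ k * (2 * M + 1) * neps_eigenvalue path3_eigval \<Omega> m a))
    = (- 1) ^ card {\<beta>\<in>\<Omega>. hamming \<beta> = k \<and> (\<forall>i<m. \<beta> ! i \<longrightarrow> a ! i \<noteq> 1)}"
proof -
  have "cis (- (pi / sqrt 2 ^ k * (2 * M + 1) * neps_eigenvalue path3_eigval \<Omega> m a))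
      = (\<Prod>\<beta>\<in>\<Omega>. cis (- (pi / sqrt 2 ^ k * (2 * M + 1) * (\<Prod>i<m. if \<beta> ! i then path3_eigval (a ! i) else 1))))"
    unfolding neps_eigenvalue_def sum_distrib_left sum_negf[symmetric] by (rule cis_sum[OF \<Omega>_fin])
  also have "\<dots> = (\<Prod>\<beta>\<in>\<Omega>. if hamming \<beta> = k \<and> (\<forall>i<m. \<beta> ! i \<longrightarrow> a ! i \<noteq> 1) then - 1 else 1)"
    using assms by (intro prod.cong refl cis_path3_term)
  finally show ?thesis using \<Omega>_fin by (simp add: prod_if_const)
qed

lemma minus_one_power_card_path3:
  assumes j: "j < m" and odd: "odd (card {\<beta>\<in>\<Omega>. hamming \<beta> = k \<and> \<beta> ! j})"
    and a: "\<forall>i<m. i \<noteq> j \<longrightarrow> a ! i \<noteq> 1"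
  shows "(- 1 :: 'a :: ring_1) ^ card {\<beta>\<in>\<Omega>. hamming \<beta> = k \<and> (\<forall>i<m. \<beta> ! i \<longrightarrow> a ! i \<noteq> 1)}
    = (if a ! j = 1 then - 1 else 1) * (- 1) ^ card {\<beta>\<in>\<Omega>. hamming \<beta> = k}"
proof -
  define \<Omega>\<^sub>k where "\<Omega>\<^sub>k = {\<beta>\<in>\<Omega>. hamming \<beta> = k}"
  have "{\<beta>\<in>\<Omega>. hamming \<beta> = k \<and> (\<forall>i<m. \<beta> ! i \<longrightarrow> a ! i \<noteq> 1)} = {\<beta>\<in>\<Omega>\<^sub>k. \<beta> ! j \<longrightarrow> a ! j \<noteq> 1}"
    using a j by (auto simp: \<Omega>\<^sub>k_def)
  moreover have "card \<Omega>\<^sub>k = card {\<beta>\<in>\<Omega>\<^sub>k. \<beta> ! j} + card {\<beta>\<in>\<Omega>\<^sub>k. \<not> \<beta> ! j}"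
    using \<Omega>_fin by (subst card_Un_disjoint[symmetric]) (auto simp: \<Omega>\<^sub>k_def intro: arg_cong[where f = card])
  ultimately show ?thesis
    using odd by (cases "a ! j = 1") (simp_all add: \<Omega>\<^sub>k_def power_add)
qed

lemma transition_neps_path3:
  fixes M :: int
  assumes j: "j < m" and odd: "odd (card {\<beta>\<in>\<Omega>. hamming \<beta> = k \<and> \<beta> ! j})"
  shows "transition (neps_verts 3 m) (neps_adj (path_adj 3) \<Omega>) (pi / sqrt 2 ^ k * (2 * M + 1))
      ((replicate m 1)[j := 0]) ((replicate m 1)[j := 2]) = (- 1) ^ card {\<beta>\<in>\<Omega>. hamming \<beta> = k}"
proof -
  define x where "x = (replicate m (1::nat))[j := 0]"
  define x' where "x' = (replicate m (1::nat))[j := 2]"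
  define S :: real where "S = (- 1) ^ card {\<beta>\<in>\<Omega>. hamming \<beta> = k}"
  define s where "s i c = (if i = j then (if c = 1 then - S else S) else 1)" for i c :: nat
  have verts: "x \<in> neps_verts 3 m" "x' \<in> neps_verts 3 m"
    by (auto simp: neps_verts_def x_def x'_def dest: set_update_subset_insert[THEN subsetD])
  \<comment> \<open>Terms with a ! i = 1 for some i \<noteq> j vanish: the eigenvector for 0 is zero at the centre.\<close>
  have term_eq: "cis (- (pi / sqrt 2 ^ k * (2 * M + 1) * neps_eigenvalue path3_eigval \<Omega> m a))
      * complex_of_real (neps_proj path3_proj m a x x')
      = complex_of_real (\<Prod>i<m. s i (a ! i) * path3_proj (a ! i) (x ! i) (x' ! i))"
    if a: "a \<in> neps_verts 3 m" for a
  proof (cases "\<forall>i<m. i \<noteq> j \<longrightarrow> a ! i \<noteq> 1")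
    case True
    then show ?thesis
      unfolding cis_neps_eigenvalue_path3[OF a] minus_one_power_card_path3[OF j odd True]
      using j by (simp add: neps_proj_def prod.distrib s_def S_def prod.delta)
  next
    case False
    then obtain i where "i < m" "i \<noteq> j" "a ! i = 1" by auto
    then have "neps_proj path3_proj m a x x' = 0" "(\<Prod>i<m. s i (a ! i) * path3_proj (a ! i) (x ! i) (x' ! i)) = 0"
      by (auto simp: neps_proj_def x_def x'_def path3_proj_def path3_eigvec_def intro!: prod_zero bexI[of _ i])
    then show ?thesis by simp
  qed
  have "transition (neps_verts 3 m) (neps_adj (path_adj 3) \<Omega>) (pi / sqrt 2 ^ k * (2 * M + 1)) x x'
      = complex_of_real (\<Sum>a\<in>neps_verts 3 m. \<Prod>i<m. s i (a ! i) * path3_proj (a ! i) (x ! i) (x' ! i))"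
    unfolding transition_spectral[OF spectral_decomposition_neps[OF spectral_decomposition_path3
          irreflp_path_adj \<Omega>_len \<Omega>_fin] verts] of_real_sum
    by (intro sum.cong refl term_eq)
  also have "(\<Sum>a\<in>neps_verts 3 m. \<Prod>i<m. s i (a ! i) * path3_proj (a ! i) (x ! i) (x' ! i))
      = (\<Prod>i<m. \<Sum>c<3. s i c * path3_proj c (x ! i) (x' ! i))"
    by (rule sum_neps_verts_prod)
  also have "\<dots> = (\<Prod>i<m. if i = j then S else 1)"
    by (intro prod.cong refl)
       (auto simp: x_def x'_def lessThan_3 s_def path3_proj_def path3_eigvec_def)
  finally show ?thesis using j by (simp add: x_def x'_def S_def)
qed

end

section \<open>Pretty good state transfer\<close>

lemma pgst_of_periodic_factor:
  fixes f g :: "real \<Rightarrow> complex" and p q c :: real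
  assumes factor: "\<And>t. transition V E t u v = f t * g t"
    and cont: "isCont f 0" and f0: "f 0 = 1" and per: "\<And>t N. f (t + q * of_int N) = f t"
    and unimodular: "\<And>M. cmod (g (c + p * of_int M)) = 1"
    and q: "q > 0" and irr: "p / q \<notin> \<rat>"
  shows "pgst V E u v"
  unfolding pgst_def
proof (intro allI impI)
  fix \<epsilon> :: real assume "\<epsilon> > 0"
  moreover have "f \<midarrow>0\<rightarrow> 1" using cont f0 by (simp add: isCont_def)
  ultimately obtain \<delta> where "\<delta> > 0" and \<delta>': "\<And>s. s \<noteq> 0 \<and> norm (s - 0) < \<delta> \<Longrightarrow> norm (f s - 1) < \<epsilon>"
    using LIM_D by blast
  have \<delta>: "norm (f s - 1) < \<epsilon>" if "\<bar>s\<bar> < \<delta>" for s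
    using \<delta>'[of s] that f0 \<open>\<epsilon> > 0\<close> by (cases "s = 0") auto
  \<comment> \<open>Kronecker: some c + p k lies within \<delta> of the lattice q \<int>, where f is close to f 0 = 1.\<close>
  obtain h k :: int where "\<bar>of_int k * (p / q) - of_int h - (- c / q)\<bar> < \<delta> / q"
    using sequence_of_fractional_parts_is_dense[OF irr] \<open>\<delta> > 0\<close> q by (metis divide_pos_pos)
  then have "\<bar>c + p * k - q * h\<bar> < \<delta>"
    using q by (simp add: field_simps abs_mult[symmetric] abs_divide pos_divide_less_eq)
  then have "norm (f (c + p * k) - 1) < \<epsilon>"
    using \<delta> per[of "c + p * k - q * h" h] by simp
  moreover have "\<bar>cmod (f t) - 1\<bar> \<le> norm (f t - 1)" for t
    by (metis norm_one norm_triangle_ineq3)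
  ultimately have "\<bar>cmod (transition V E (c + p * k) u v) - 1\<bar> < \<epsilon>"
    using unimodular[of k] by (simp add: factor norm_mult) (meson le_less_trans)
  then show "\<exists>t. \<bar>cmod (transition V E t u v) - 1\<bar> < \<epsilon>" ..
qed

lemma sqrt2_irrational: "sqrt 2 \<notin> \<rat>"
proof
  assume "sqrt 2 \<in> \<rat>"
  then obtain a b :: nat where "b \<noteq> 0" and "\<bar>sqrt 2\<bar> = a / b" and "coprime a b"
    by (rule Rats_abs_nat_div_natE)
  then have "real a = sqrt 2 * real b" by (simp add: field_simps)
  then have "real (a\<^sup>2) = real (2 * b\<^sup>2)" by (simp add: power_mult_distrib)
  then have ab: "a\<^sup>2 = 2 * b\<^sup>2" by (simp only: of_nat_eq_iff)
  then have "2 dvd a" by (metis even_mult_iff odd_powerI even_numeral)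
  then obtain c where "a = 2 * c" ..
  with ab have "b\<^sup>2 = 2 * c\<^sup>2" by (simp add: power_mult_distrib)
  then have "2 dvd b" by (metis even_mult_iff odd_powerI even_numeral)
  with \<open>2 dvd a\<close> \<open>coprime a b\<close> show False
    by auto
qed

lemma sqrt2_power_odd_irrational:
  assumes "odd k" shows "1 / sqrt 2 ^ k \<notin> \<rat>"
proof
  assume "1 / sqrt 2 ^ k \<in> \<rat>"
  then have rat: "sqrt 2 ^ k \<in> \<rat>"
    by (metis Rats_inverse inverse_eq_divide inverse_inverse_eq)
  obtain r where "k = 2 * r + 1" using assms oddE by blast
  then have "sqrt 2 = sqrt 2 ^ k / 2 ^ r"
    by (simp add: power_add power_mult)
  also have "\<dots> \<in> \<rat>" by (rule Rats_divide[OF rat]) simp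
  finally show False using sqrt2_irrational by simp
qed

lemma z2_sum_neq_zero_obtain:
  assumes "z2_sum m S \<noteq> z2_zero m"
  obtains j where "j < m" "odd (card {\<beta>\<in>S. \<beta> ! j})"
proof -
  have "\<exists>j<m. odd (card {\<beta>\<in>S. \<beta> ! j})"
  proof (rule ccontr)
    assume "\<not> ?thesis"
    then have "z2_sum m S = z2_zero m"
      unfolding z2_sum_def z2_zero_def by (intro nth_equalityI) auto
    with assms show False ..
  qed
  then show thesis using that by blast
qed

lemma finite_bool_lists_length: "finite {\<beta>::bool list. length \<beta> = m}"
  using finite_lists_length_eq[of "UNIV :: bool set" m] by simp

lemma neq_z2_zero_ex_True:
  assumes "length \<beta> = m" "\<beta> \<noteq> z2_zero m" shows "\<exists>i<length \<beta>. \<beta> ! i"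
  using assms unfolding z2_zero_def by (metis in_set_conv_nth replicate_eqI)

context
  fixes m n :: nat and \<Omega> \<Omega>' :: "bool list set"
  assumes \<Omega>: "\<Omega> \<subseteq> {\<beta>. length \<beta> = m} - {z2_zero m}"
    and \<Omega>': "\<Omega>' \<subseteq> {\<beta>. length \<beta> = n} - {z2_zero n}"
begin

lemma finite_connection_sets: "finite \<Omega>" "finite \<Omega>'"
  using finite_subset[OF _ finite_bool_lists_length[of m], of \<Omega>]
    finite_subset[OF _ finite_bool_lists_length[of n], of \<Omega>'] \<Omega> \<Omega>' by auto

lemma neps_path3_decomposition:
  "spectral_decomposition (neps_verts 3 m) (neps_adj (path_adj 3) \<Omega>) (neps_verts 3 m)
     (neps_proj path3_proj m) (neps_eigenvalue path3_eigval \<Omega> m)"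
  using \<Omega> finite_connection_sets by (intro spectral_decomposition_neps spectral_decomposition_path3 irreflp_path_adj) auto

lemma neps_path2_decomposition:
  "spectral_decomposition (neps_verts 2 n) (neps_adj (path_adj 2) \<Omega>') (neps_verts 2 n)
     (neps_proj path2_proj n) (neps_eigenvalue path2_eigval \<Omega>' n)"
  using \<Omega>' finite_connection_sets by (intro spectral_decomposition_neps spectral_decomposition_path2 irreflp_path_adj) auto

lemma transition_neps_cart:
  assumes "x \<in> neps_verts 3 m" "x' \<in> neps_verts 3 m" "y \<in> neps_verts 2 n" "y' \<in> neps_verts 2 n"
  shows "transition (neps_verts 3 m \<times> neps_verts 2 n) (cart_adj (neps_adj (path_adj 3) \<Omega>) (neps_adj (path_adj 2) \<Omega>'))
      t (x, y) (x', y')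
    = transition (neps_verts 3 m) (neps_adj (path_adj 3) \<Omega>) t x x' * transition (neps_verts 2 n) (neps_adj (path_adj 2) \<Omega>') t y y'"
proof (rule transition_cart[OF neps_path3_decomposition neps_path2_decomposition _ assms])
  show "irreflp (neps_adj (path_adj 3) \<Omega>)"
  proof (rule irreflp_neps_adj[OF irreflp_path_adj])
    fix \<beta> assume "\<beta> \<in> \<Omega>"
    then show "\<exists>i<length \<beta>. \<beta> ! i" using \<Omega> neq_z2_zero_ex_True[of \<beta> m] by blast
  qed
qed

lemma pgst_of_path2_transfer:
  assumes weights: "\<forall>\<beta>\<in>\<Omega>. odd (hamming \<beta>)" and sum: "z2_sum n \<Omega>' \<noteq> z2_zero n"
  shows "\<exists>u v. u \<in> neps_verts 3 m \<times> neps_verts 2 n \<and> v \<in> neps_verts 3 m \<times> neps_verts 2 n \<and> u \<noteq> v \<and>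
    pgst (neps_verts 3 m \<times> neps_verts 2 n) (cart_adj (neps_adj (path_adj 3) \<Omega>) (neps_adj (path_adj 2) \<Omega>')) u v"
proof -
  let ?T3 = "transition (neps_verts 3 m) (neps_adj (path_adj 3) \<Omega>)"
  let ?T2 = "transition (neps_verts 2 n) (neps_adj (path_adj 2) \<Omega>')"
  obtain j where j: "j < n" "odd (card {\<beta>\<in>\<Omega>'. \<beta> ! j})" using sum by (rule z2_sum_neq_zero_obtain)
  define x where "x = replicate m (1::nat)"
  define y where "y = replicate n (0::nat)"
  define y' where "y' = map (\<lambda>j. if odd (card {\<beta>\<in>\<Omega>'. \<beta> ! j}) then 1 else 0::nat) [0..<n]"
  have verts: "x \<in> neps_verts 3 m" "y \<in> neps_verts 2 n" "y' \<in> neps_verts 2 n"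
    by (auto simp: neps_verts_def x_def y_def y'_def)
  have "y ! j \<noteq> y' ! j" using j by (simp add: y_def y'_def)
  moreover have "pgst (neps_verts 3 m \<times> neps_verts 2 n) (cart_adj (neps_adj (path_adj 3) \<Omega>) (neps_adj (path_adj 2) \<Omega>'))
      (x, y) (x, y')"
  proof (rule pgst_of_periodic_factor[where f = "\<lambda>t. ?T3 t x x" and g = "\<lambda>t. ?T2 t y y'"
        and q = "2 * pi / sqrt 2" and p = "2 * pi" and c = "pi / 2"])
    show "isCont (\<lambda>t. ?T3 t x x) 0" "?T3 0 x x = 1"
      using verts by (simp_all add: isCont_transition[OF neps_path3_decomposition] transition_at_0[OF neps_path3_decomposition])
    show "?T3 (t + 2 * pi / sqrt 2 * of_int N) x x = ?T3 t x x" for t N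
      using verts \<Omega> weights
      by (intro transition_periodic[OF neps_path3_decomposition] neps_eigenvalue_path3_sqrt2) auto
    have "\<Omega>' \<subseteq> {\<beta>. length \<beta> = n}" using \<Omega>' by blast
    from transition_neps_path2_half_pi[OF this finite_connection_sets(2)]
    show "cmod (?T2 (pi / 2 + 2 * pi * of_int M) y y') = 1" for M
      by (simp add: y_def y'_def norm_power)
    show "2 * pi / (2 * pi / sqrt 2) \<notin> \<rat>"
      using sqrt2_irrational by simp
  qed (use verts transition_neps_cart in auto)
  ultimately show ?thesis using verts by blast
qed

lemma pgst_of_path3_transfer:
  assumes weights: "\<forall>\<beta>\<in>\<Omega>. odd (hamming \<beta>)" and "\<Omega> \<noteq> {}"
    and sum: "z2_sum m {\<beta>\<in>\<Omega>. hamming \<beta> = Min (hamming ` \<Omega>)} \<noteq> z2_zero m"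
  shows "\<exists>u v. u \<in> neps_verts 3 m \<times> neps_verts 2 n \<and> v \<in> neps_verts 3 m \<times> neps_verts 2 n \<and> u \<noteq> v \<and>
    pgst (neps_verts 3 m \<times> neps_verts 2 n) (cart_adj (neps_adj (path_adj 3) \<Omega>) (neps_adj (path_adj 2) \<Omega>')) u v"
proof -
  let ?T3 = "transition (neps_verts 3 m) (neps_adj (path_adj 3) \<Omega>)"
  let ?T2 = "transition (neps_verts 2 n) (neps_adj (path_adj 2) \<Omega>')"
  define k where "k = Min (hamming ` \<Omega>)"
  have "k \<in> hamming ` \<Omega>"
    unfolding k_def using finite_connection_sets \<open>\<Omega> \<noteq> {}\<close> by (intro Min_in) auto
  then have "odd k" using weights by auto
  have min_weights: "\<forall>\<beta>\<in>\<Omega>. odd (hamming \<beta>) \<and> k \<le> hamming \<beta>"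
    using weights finite_connection_sets by (auto simp: k_def)
  obtain j where j: "j < m" "odd (card {\<beta>\<in>{\<beta>\<in>\<Omega>. hamming \<beta> = k}. \<beta> ! j})"
    using sum unfolding k_def[symmetric] by (rule z2_sum_neq_zero_obtain)
  define x where "x = (replicate m (1::nat))[j := 0]"
  define x' where "x' = (replicate m (1::nat))[j := 2]"
  define y where "y = replicate n (0::nat)"
  have verts: "x \<in> neps_verts 3 m" "x' \<in> neps_verts 3 m" "y \<in> neps_verts 2 n"
    by (auto simp: neps_verts_def x_def x'_def y_def dest: set_update_subset_insert[THEN subsetD])
  have "x ! j \<noteq> x' ! j" using j by (simp add: x_def x'_def)
  moreover have "pgst (neps_verts 3 m \<times> neps_verts 2 n) (cart_adj (neps_adj (path_adj 3) \<Omega>) (neps_adj (path_adj 2) \<Omega>'))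
      (x, y) (x', y)"
  proof (rule pgst_of_periodic_factor[where f = "\<lambda>t. ?T2 t y y" and g = "\<lambda>t. ?T3 t x x'"
        and q = "2 * pi / 1" and p = "2 * pi / sqrt 2 ^ k" and c = "pi / sqrt 2 ^ k"])
    show "isCont (\<lambda>t. ?T2 t y y) 0" "?T2 0 y y = 1"
      using verts by (simp_all add: isCont_transition[OF neps_path2_decomposition] transition_at_0[OF neps_path2_decomposition])
    show "?T2 (t + 2 * pi / 1 * of_int N) y y = ?T2 t y y" for t N
      using verts by (intro transition_periodic[OF neps_path2_decomposition] neps_eigenvalue_path2_int) auto
    have "\<Omega> \<subseteq> {\<beta>. length \<beta> = m}" using \<Omega> by blast
    note transfer = transition_neps_path3[OF this finite_connection_sets(1) min_weights \<open>odd k\<close> j(1)]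
    show "cmod (?T3 (pi / sqrt 2 ^ k + 2 * pi / sqrt 2 ^ k * of_int M) x x') = 1" for M
      using transfer[of M] j(2) by (simp add: x_def x'_def norm_power field_simps)
    show "2 * pi / sqrt 2 ^ k / (2 * pi / 1) \<notin> \<rat>"
      using sqrt2_power_odd_irrational[OF \<open>odd k\<close>] by simp
  qed (use verts transition_neps_cart in \<open>auto simp: mult.commute\<close>)
  ultimately show ?thesis using verts by blast
qed

end

theorem corollary4p4:
  fixes m n :: nat and \<Omega> \<Omega>' :: "bool list set"
  assumes "\<Omega> \<subseteq> {\<beta>. length \<beta> = m} - {z2_zero m}" and "\<Omega> \<noteq> {}"
    and "\<forall>\<beta>\<in>\<Omega>. odd (hamming \<beta>)"
    and "\<Omega>' \<subseteq> {\<beta>. length \<beta> = n} - {z2_zero n}" and "\<Omega>' \<noteq> {}"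
    and "z2_sum m {\<beta>\<in>\<Omega>. hamming \<beta> = Min (hamming ` \<Omega>)} \<noteq> z2_zero m
         \<or> z2_sum n \<Omega>' \<noteq> z2_zero n"
  shows "\<exists>u v. u \<in> neps_verts 3 m \<times> neps_verts 2 n \<and> v \<in> neps_verts 3 m \<times> neps_verts 2 n \<and> u \<noteq> v \<and>
           pgst (neps_verts 3 m \<times> neps_verts 2 n)
                (cart_adj (neps_adj (path_adj 3) \<Omega>) (neps_adj (path_adj 2) \<Omega>')) u v"
  using assms(6)
proof
  assume "z2_sum m {\<beta>\<in>\<Omega>. hamming \<beta> = Min (hamming ` \<Omega>)} \<noteq> z2_zero m"
  then show ?thesis by (rule pgst_of_path3_transfer[OF assms(1,4,3,2)])
next
  assume "z2_sum n \<Omega>' \<noteq> z2_zero n"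
  then show ?thesis by (rule pgst_of_path2_transfer[OF assms(1,4,3)])
qed

end
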